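(* Under the standing assumptions, let $i,j\in I$ with $i\ne j$ and $d_X(e_i,e)\ge d_X(e_j,e)$. Then every path in $X$ from a point of $X_i$ to a point of $X_j$ meets $B(e_i;4M)$.
   Context: Standing assumptions: $X$ is a geodesic metric space with the RBP with respect to pieces $\{X_i:i\in I\}$ and constant $M>0$. Here $B(x;r)=\{z:d(x,z)<r\}$, $N_r(A)=\{z:d(z,A)\le r\}$, and RBP means: $X=\bigcup_i X_i$ and for all $i\neq j$ there is a fixed finite ordered set $I_{i,j}=\{i=i_0,i_1,\dots,i_s=j\}\subseteq I$ and points $w_r\in X_{i_r}\cap X_{i_{r+1}}$ ($0\le r<s$), forming the set $W_{i,j}$, such that every path in $X$ from $X_i$ to $X_j$ meets each $B(w_r;M)$. Moreover: a point $e\in X$ lies in exactly one piece, indexed $e\in I$ (so $X_e$); with $b=15M$, for every open ball $B$ and every $i$ with $\operatorname{diam}(B\cap X_i)\le 2b$, $X_i\setminus B$ is path-connected. For $i\ne e$, $e_i\in X_i$ is the point $w_0\in W_{i,e}$ (so every path from $X_i$ to $X_e$ meets $B(e_i;M)$); $e_e:=e$. *)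

theory Defs
  imports "HOL-Analysis.Analysis"
begin

definition geodesic_space :: "'a::metric_space set \<Rightarrow> bool" where
  "geodesic_space S \<longleftrightarrow>
     (\<forall>x\<in>S. \<forall>y\<in>S. \<exists>g::real \<Rightarrow> 'a.
        g 0 = x \<and> g (dist x y) = y \<and> g ` {0..dist x y} \<subseteq> S \<and>
        (\<forall>s\<in>{0..dist x y}. \<forall>t\<in>{0..dist x y}. dist (g s) (g t) = \<bar>s - t\<bar>))"

text \<open>RBP of the whole space (the universe of type 'a) with respect to pieces
X i (i in I) and constant M, with the fixed data: L i j is the ordered set
I_{i,j} = [i_0, ..., i_s] and W i j = [w_0, ..., w_{s-1}].\<close>
definition RBP :: "'i set \<Rightarrow> ('i \<Rightarrow> 'a::metric_space set) \<Rightarrow> real \<Rightarrow>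
    ('i \<Rightarrow> 'i \<Rightarrow> 'i list) \<Rightarrow> ('i \<Rightarrow> 'i \<Rightarrow> 'a list) \<Rightarrow> bool" where
  "RBP I X M L W \<longleftrightarrow> 0 < M \<and> (\<Union>i\<in>I. X i) = UNIV \<and>
     (\<forall>i\<in>I. \<forall>j\<in>I. i \<noteq> j \<longrightarrow>
        distinct (L i j) \<and> set (L i j) \<subseteq> I \<and> length (L i j) \<ge> 2 \<and>
        hd (L i j) = i \<and> last (L i j) = j \<and>
        length (W i j) = length (L i j) - 1 \<and>
        (\<forall>r < length (W i j). W i j ! r \<in> X (L i j ! r) \<inter> X (L i j ! Suc r)) \<and>
        (\<forall>g. path g \<and> g 0 \<in> X i \<and> g 1 \<in> X j \<longrightarrow>
           (\<forall>r < length (W i j). \<exists>t\<in>{0..1}. g t \<in> ball (W i j ! r) M)))"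

definition epoint :: "('i \<Rightarrow> 'i \<Rightarrow> 'a list) \<Rightarrow> 'i \<Rightarrow> 'a \<Rightarrow> 'i \<Rightarrow> 'a" where
  "epoint W ie e i = (if i = ie then e else hd (W i ie))"

end

theory Submission
  imports Defs
begin

text \<open>
  Write e_i for the point epoint W ie e i.  The proof compares the two points e_i and e_j.

  If d(e_i,e_j) < 2M, the first RBP gate w of the pair (i,j) lies within M of the geodesic
  from e_i to e_j, hence within 3M of e_i; any path from X_i to X_j passes within M of w and
  so enters B(e_i;4M).

  If d(e_i,e_j) \<ge> 2M and a path g from X_i to X_j avoided even B(e_i;2M), then X_j minus B(e_i;2M)
  is path-connected (the ball meets X_j in a set of diameter at most 4M \<le> 30M), so g can be
  continued inside X_j, outside B(e_i;2M), to e_j and then along a geodesic to e.  This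
  path from X_i to X_ie must pass within M of e_i; it can only do so on the geodesic from
  e_j to e, and since d(e_j,e) \<le> d(e_i,e) such a point forces d(e_i,e_j) < 2M.
\<close>

lemma geodesic_path:
  fixes x y :: "'a::metric_space"
  assumes geo: "geodesic_space (UNIV :: 'a set)"
  obtains \<gamma> where "path \<gamma>" "pathstart \<gamma> = x" "pathfinish \<gamma> = y"
    "\<And>p. p \<in> path_image \<gamma> \<Longrightarrow> dist x p + dist p y = dist x y"
proof -
  define D where "D = dist x y"
  obtain g :: "real \<Rightarrow> 'a" where g0: "g 0 = x" and gD: "g D = y"
    and iso: "\<forall>s\<in>{0..D}. \<forall>t\<in>{0..D}. dist (g s) (g t) = \<bar>s - t\<bar>"
    using geo unfolding geodesic_space_def D_def by blast
  have D0: "0 \<le> D" unfolding D_def by simp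
  define \<gamma> where "\<gamma> t = g (D * t)" for t
  have "D * t \<in> {0..D}" if "t \<in> {0..1}" for t
    using that D0 by (auto intro: mult_left_le)
  then have dist_\<gamma>: "dist (\<gamma> s) (\<gamma> t) = D * \<bar>s - t\<bar>" if "s \<in> {0..1}" "t \<in> {0..1}" for s t
    using iso that D0 unfolding \<gamma>_def by (simp add: abs_mult right_diff_distrib[symmetric])
  have "D-lipschitz_on {0..1} \<gamma>"
    by (rule lipschitz_onI) (use dist_\<gamma> D0 in \<open>auto simp: dist_real_def\<close>)
  then have "path \<gamma>"
    unfolding path_def by (rule lipschitz_on_continuous_on)
  moreover have ends: "\<gamma> 0 = x" "\<gamma> 1 = y"
    unfolding \<gamma>_def using g0 gD by auto
  moreover have "dist x p + dist p y = D" if p: "p \<in> path_image \<gamma>" for p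
  proof -
    obtain t where t: "t \<in> {0..1}" "p = \<gamma> t"
      using p unfolding path_image_def by auto
    show ?thesis
      using dist_\<gamma>[of 0 t] dist_\<gamma>[of t 1] t ends by (auto simp: algebra_simps)
  qed
  ultimately show ?thesis
    using that unfolding pathstart_def pathfinish_def D_def by blast
qed

lemma diameter_inter_ball_le:
  fixes c :: "'a::metric_space"
  assumes "0 \<le> r"
  shows "diameter (ball c r \<inter> S) \<le> 2 * r"
proof -
  have "dist x y \<le> 2 * r" if "x \<in> ball c r" "y \<in> ball c r" for x y
    using that dist_triangle[of x y c] by (simp add: dist_commute)
  then show ?thesis
    using assms unfolding diameter_def by (auto intro!: cSUP_least)
qed

lemma common_gate_near:
  fixes a p q w :: "'a::metric_space"
  assumes "dist p w < M" "dist q w < M" "dist a p \<le> r"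
  shows "dist a q < r + 2 * M"
  using assms dist_triangle[of a q w] dist_triangle[of a w p]
  by (simp add: dist_commute)

lemma between_point_near:
  fixes a b e p :: "'a::metric_space"
  assumes between: "dist b p + dist p e = dist b e"
    and closer: "dist b e \<le> dist a e"
    and near: "dist a p < M"
  shows "dist a b < 2 * M"
proof -
  have "dist b p \<le> dist a p"
    using between closer dist_triangle[of a e p] by linarith
  then show ?thesis
    using near dist_triangle[of a b p] dist_commute[of p b] by linarith
qed

lemma RBP_first_gate:
  assumes rbp: "RBP I X M L W" and ab: "a \<in> I" "b \<in> I" "a \<noteq> b"
  shows "hd (W a b) \<in> X a"
    and "\<And>g. path g \<Longrightarrow> g 0 \<in> X a \<Longrightarrow> g 1 \<in> X b \<Longrightarrow> \<exists>t\<in>{0..1}. g t \<in> ball (hd (W a b)) M"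
proof -
  have R: "length (L a b) \<ge> 2" "hd (L a b) = a" "length (W a b) = length (L a b) - 1"
    "\<forall>r < length (W a b). W a b ! r \<in> X (L a b ! r) \<inter> X (L a b ! Suc r)"
    "\<forall>g. path g \<and> g 0 \<in> X a \<and> g 1 \<in> X b \<longrightarrow>
        (\<forall>r < length (W a b). \<exists>t\<in>{0..1}. g t \<in> ball (W a b ! r) M)"
    using rbp ab unfolding RBP_def by blast+
  have len: "0 < length (W a b)" using R(1,3) by simp
  then have hdW: "hd (W a b) = W a b ! 0" by (simp add: hd_conv_nth)
  have "L a b \<noteq> []" using R(1) by auto
  then have "L a b ! 0 = a" using R(2) by (simp add: hd_conv_nth)
  then show "hd (W a b) \<in> X a" using R(4) len hdW by auto
  show "\<exists>t\<in>{0..1}. g t \<in> ball (hd (W a b)) M"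
    if "path g" "g 0 \<in> X a" "g 1 \<in> X b" for g
    using R(5) that len hdW by auto
qed

lemma epoint_in_piece:
  assumes "RBP I X M L W" "ie \<in> I" "e \<in> X ie" "k \<in> I"
  shows "epoint W ie e k \<in> X k"
  using RBP_first_gate(1)[OF assms(1) assms(4,2)] assms(3) by (cases "k = ie") (auto simp: epoint_def)

lemma epoint_gate:
  assumes "RBP I X M L W" "ie \<in> I" "k \<in> I" "k \<noteq> ie"
    and "path g" "g 0 \<in> X k" "g 1 \<in> X ie"
  shows "\<exists>t\<in>{0..1}. g t \<in> ball (epoint W ie e k) M"
  using RBP_first_gate(2)[OF assms(1) assms(3,2,4) assms(5-7)] assms(4) by (simp add: epoint_def)

lemma near_case:
  fixes a b :: "'a::metric_space"
  assumes geo: "geodesic_space (UNIV :: 'a set)" and rbp: "RBP I X M L W"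
    and ij: "i \<in> I" "j \<in> I" "i \<noteq> j"
    and ab: "a \<in> X i" "b \<in> X j" "dist a b < 2 * M"
    and g: "path g" "g 0 \<in> X i" "g 1 \<in> X j"
  shows "\<exists>t\<in>{0..1}. g t \<in> ball a (4 * M)"
proof -
  obtain \<gamma> where \<gamma>: "path \<gamma>" "pathstart \<gamma> = a" "pathfinish \<gamma> = b"
    and between: "\<And>p. p \<in> path_image \<gamma> \<Longrightarrow> dist a p + dist p b = dist a b"
    using geodesic_path[OF geo, of a b] by blast
  obtain s where s: "s \<in> {0..1}" "\<gamma> s \<in> ball (hd (W i j)) M"
    using RBP_first_gate(2)[OF rbp ij, of \<gamma>] \<gamma> ab unfolding pathstart_def pathfinish_def by auto
  obtain t where t: "t \<in> {0..1}" "g t \<in> ball (hd (W i j)) M"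
    using RBP_first_gate(2)[OF rbp ij g] by blast
  have s_on: "\<gamma> s \<in> path_image \<gamma>" using s(1) by (simp add: path_image_def)
  have "dist a (\<gamma> s) \<le> dist a b"
    using between[OF s_on] zero_le_dist[of "\<gamma> s" b] by linarith
  then have "dist a (g t) < dist a b + 2 * M"
    using s t by (intro common_gate_near[where w = "hd (W i j)"]) (auto simp: dist_commute)
  then show ?thesis using t(1) ab(3) by force
qed

lemma far_case:
  fixes a b e :: "'a::metric_space"
  assumes geo: "geodesic_space (UNIV :: 'a set)" and M0: "0 < M"
    and far: "2 * M \<le> dist a b" and b: "b \<in> X j"
    and closer: "dist b e \<le> dist a e" and e: "e \<in> X ie"
    and pcj: "path_connected (X j - ball a (2 * M))"
    and gate: "\<And>P. path P \<Longrightarrow> P 0 \<in> X i \<Longrightarrow> P 1 \<in> X ie \<Longrightarrow> \<exists>t\<in>{0..1}. P t \<in> ball a M"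
    and g: "path g" "g 0 \<in> X i" "g 1 \<in> X j"
  shows "\<exists>t\<in>{0..1}. g t \<in> ball a (2 * M)"
proof (rule ccontr)
  assume avoid: "\<not> (\<exists>t\<in>{0..1}. g t \<in> ball a (2 * M))"
  then have "g 1 \<in> X j - ball a (2 * M)" using g by auto
  moreover have "b \<in> X j - ball a (2 * M)" using b far by auto
  ultimately obtain h where h: "path h" "path_image h \<subseteq> X j - ball a (2 * M)"
    "pathstart h = g 1" "pathfinish h = b"
    using pcj unfolding path_connected_def by blast
  obtain \<beta> where \<beta>: "path \<beta>" "pathstart \<beta> = b" "pathfinish \<beta> = e"
    and between: "\<And>p. p \<in> path_image \<beta> \<Longrightarrow> dist b p + dist p e = dist b e"
    using geodesic_path[OF geo, of b e] by blast
  define P where "P = g +++ (h +++ \<beta>)"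
  have "path (h +++ \<beta>)" "pathstart (h +++ \<beta>) = pathfinish g"
    using h \<beta> by (simp_all add: pathfinish_def)
  then have "path P" "P 0 = g 0" "P 1 = e"
    using g \<beta>(3) unfolding P_def by (auto simp: pathstart_def[symmetric] pathfinish_def[symmetric])
  then obtain p where p: "p \<in> path_image P" "dist a p < M"
    using gate[of P] g e unfolding path_image_def by force
  have "path_image P \<subseteq> path_image g \<union> path_image h \<union> path_image \<beta>"
    unfolding P_def using path_image_join_subset[of g "h +++ \<beta>"] path_image_join_subset[of h \<beta>]
    by blast
  moreover have "p \<notin> path_image g" "p \<notin> path_image h"
    using avoid h(2) p(2) M0 unfolding path_image_def by force+
  ultimately have "p \<in> path_image \<beta>" using p(1) by blast
  then have "dist a b < 2 * M"
    using between_point_near[OF between closer p(2)] by blast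
  with far show False by simp
qed

theorem lemma3p2:
  fixes I :: "'i set" and X :: "'i \<Rightarrow> 'a::metric_space set" and M :: real
    and L :: "'i \<Rightarrow> 'i \<Rightarrow> 'i list" and W :: "'i \<Rightarrow> 'i \<Rightarrow> 'a list"
    and e :: 'a and ie :: 'i and i j :: 'i
  assumes geo: "geodesic_space (UNIV :: 'a set)"
    and rbp: "RBP I X M L W"
    and ie: "ie \<in> I" "e \<in> X ie" "\<forall>k\<in>I. e \<in> X k \<longrightarrow> k = ie"
    and pc: "\<forall>x r k. 0 < r \<and> k \<in> I \<and> diameter (ball x r \<inter> X k) \<le> 2 * (15 * M)
               \<longrightarrow> path_connected (X k - ball x r)"
    and ij: "i \<in> I" "j \<in> I" "i \<noteq> j"
    and d: "dist (epoint W ie e i) e \<ge> dist (epoint W ie e j) e"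
  shows "\<forall>g. path g \<and> g 0 \<in> X i \<and> g 1 \<in> X j \<longrightarrow>
           (\<exists>t\<in>{0..1}. g t \<in> ball (epoint W ie e i) (4 * M))"
proof (intro allI impI)
  fix g :: "real \<Rightarrow> 'a" assume g: "path g \<and> g 0 \<in> X i \<and> g 1 \<in> X j"
  define a b where "a = epoint W ie e i" and "b = epoint W ie e j"
  have M0: "0 < M" using rbp unfolding RBP_def by simp
  have a: "a \<in> X i" and b: "b \<in> X j"
    unfolding a_def b_def using epoint_in_piece[OF rbp ie(1,2)] ij by auto
  text \<open>e_i = e would force e_j = e, so e \<in> X_j and j = ie = i.\<close>
  have i_ie: "i \<noteq> ie"
    using d b ie(3) ij unfolding a_def b_def by (auto simp: epoint_def)
  show "\<exists>t\<in>{0..1}. g t \<in> ball (epoint W ie e i) (4 * M)"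
  proof (cases "dist a b < 2 * M")
    case True
    then show ?thesis using near_case[OF geo rbp ij a b] g unfolding a_def b_def by blast
  next
    case False
    have "path_connected (X j - ball a (2 * M))"
      using pc ij(2) M0 diameter_inter_ball_le[of "2 * M" a "X j"] by auto
    moreover have "\<exists>t\<in>{0..1}. P t \<in> ball a M"
      if "path P" "P 0 \<in> X i" "P 1 \<in> X ie" for P
      using epoint_gate[OF rbp ie(1) ij(1) i_ie that] unfolding a_def .
    moreover have "2 * M \<le> dist a b" "dist b e \<le> dist a e"
      using False d unfolding a_def b_def by auto
    ultimately have "\<exists>t\<in>{0..1}. g t \<in> ball a (2 * M)"
      using far_case[where X = X and i = i and j = j and ie = ie, OF geo M0 _ b _ ie(2)] g
      by blast
    then show ?thesis using M0 unfolding a_def b_def by force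
  qed
qed

end
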